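(* There is a coreflection $\mathcal{S}\ell\dashv\bigwedge C^{op}$ between the category $\mathbf{Frm}$ of frames and the category of strong topological coframes; that is, $\mathcal S\ell:\mathbf{Frm}\to\mathbf{StrTopCoFrm}$ is left adjoint to $\bigwedge C^{op}$, and the unit $\Omega\to\bigwedge C^{op}(\mathcal S\ell(\Omega))$, $u\mapsto\mathfrak c(u)$, is an isomorphism.
   Context: A coframe is a complete lattice in which arbitrary infima distribute over binary suprema; coframe morphisms preserve arbitrary infima and finite suprema. A topological coframe is a coframe $L$ with a sublattice $C(L)$ of complemented elements (its closed elements); morphisms are coframe morphisms $\varphi$ with $\varphi(C(L))\subseteq C(L')$. A topological coframe is strong if $C(L)$ is closed under arbitrary infima taken in $L$; $\mathbf{StrTopCoFrm}$ denotes the full subcategory of strong ones. The functor $\bigwedge C^{op}$ sends a topological coframe $L$ to the frame $(\bigwedge C(L))^{op}$, where $\bigwedge C(L)$ is the set of infima of elements of $C(L)$ (a subcoframe of $L$), and acts on morphisms by restriction. For a frame $\Omega$, a sublocale is a subset $S\subseteq\Omega$ closed under arbitrary meets and such that $u\Rightarrow s\in S$ for all $u\in\Omega$, $s\in S$ ($\Rightarrow$ the Heyting implication); the sublocales ordered by inclusion form a coframe $\mathcal S\ell(\Omega)$. For $u\in\Omega$, the closed sublocale is $\mathfrak c(u)={\uparrow}u$; it is complemented in $\mathcal S\ell(\Omega)$ and $\mathfrak c:\Omega^{op}\to\mathcal S\ell(\Omega)$ is a coframe order-embedding. $\mathcal S\ell(\Omega)$ is made a topological coframe by $C(\mathcal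 S\ell(\Omega))=\{\mathfrak c(u):u\in\Omega\}$; for a frame morphism $\varphi:\Omega\to\Omega'$, $\mathcal S\ell(\varphi)$ is the unique coframe morphism $\mathcal S\ell(\Omega)\to\mathcal S\ell(\Omega')$ with $\mathfrak c(u)\mapsto\mathfrak c(\varphi(u))$. *)

theory Defs
  imports Main
begin

text \<open>Ordered structures are represented by a carrier set together with an
order relation on it (needed since the sublocales of a frame form a subset of
a powerset, not a type).\<close>

record 'a pos =
  pcarrier :: "'a set"
  ple :: "'a \<Rightarrow> 'a \<Rightarrow> bool"

record 'a tcof = "'a pos" +
  closed :: "'a set"

definition is_poset :: "('a, 'z) pos_scheme \<Rightarrow> bool" where
  "is_poset P \<longleftrightarrow>
     (\<forall>x\<in>pcarrier P. ple P x x) \<and>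
     (\<forall>x\<in>pcarrier P. \<forall>y\<in>pcarrier P. ple P x y \<and> ple P y x \<longrightarrow> x = y) \<and>
     (\<forall>x\<in>pcarrier P. \<forall>y\<in>pcarrier P. \<forall>z\<in>pcarrier P. ple P x y \<and> ple P y z \<longrightarrow> ple P x z)"

definition is_lub :: "('a, 'z) pos_scheme \<Rightarrow> 'a set \<Rightarrow> 'a \<Rightarrow> bool" where
  "is_lub P S x \<longleftrightarrow> x \<in> pcarrier P \<and> (\<forall>s\<in>S. ple P s x) \<and>
     (\<forall>y\<in>pcarrier P. (\<forall>s\<in>S. ple P s y) \<longrightarrow> ple P x y)"

definition is_glb :: "('a, 'z) pos_scheme \<Rightarrow> 'a set \<Rightarrow> 'a \<Rightarrow> bool" where
  "is_glb P S x \<longleftrightarrow> x \<in> pcarrier P \<and> (\<forall>s\<in>S. ple P x s) \<and>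
     (\<forall>y\<in>pcarrier P. (\<forall>s\<in>S. ple P y s) \<longrightarrow> ple P y x)"

definition complete_lat :: "('a, 'z) pos_scheme \<Rightarrow> bool" where
  "complete_lat P \<longleftrightarrow> is_poset P \<and>
     (\<forall>S. S \<subseteq> pcarrier P \<longrightarrow> (\<exists>x. is_lub P S x)) \<and>
     (\<forall>S. S \<subseteq> pcarrier P \<longrightarrow> (\<exists>x. is_glb P S x))"

definition Sup_P :: "('a, 'z) pos_scheme \<Rightarrow> 'a set \<Rightarrow> 'a" where
  "Sup_P P S = (THE x. is_lub P S x)"

definition Inf_P :: "('a, 'z) pos_scheme \<Rightarrow> 'a set \<Rightarrow> 'a" where
  "Inf_P P S = (THE x. is_glb P S x)"

definition join_P :: "('a, 'z) pos_scheme \<Rightarrow> 'a \<Rightarrow> 'a \<Rightarrow> 'a" where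
  "join_P P a b = Sup_P P {a, b}"

definition meet_P :: "('a, 'z) pos_scheme \<Rightarrow> 'a \<Rightarrow> 'a \<Rightarrow> 'a" where
  "meet_P P a b = Inf_P P {a, b}"

definition top_P :: "('a, 'z) pos_scheme \<Rightarrow> 'a" where
  "top_P P = Inf_P P {}"

definition bot_P :: "('a, 'z) pos_scheme \<Rightarrow> 'a" where
  "bot_P P = Sup_P P {}"

definition is_frame :: "('a, 'z) pos_scheme \<Rightarrow> bool" where
  "is_frame P \<longleftrightarrow> complete_lat P \<and>
     (\<forall>a\<in>pcarrier P. \<forall>S. S \<subseteq> pcarrier P \<longrightarrow>
        meet_P P a (Sup_P P S) = Sup_P P ((\<lambda>s. meet_P P a s) ` S))"

definition is_coframe :: "('a, 'z) pos_scheme \<Rightarrow> bool" where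
  "is_coframe P \<longleftrightarrow> complete_lat P \<and>
     (\<forall>a\<in>pcarrier P. \<forall>S. S \<subseteq> pcarrier P \<longrightarrow>
        join_P P a (Inf_P P S) = Inf_P P ((\<lambda>s. join_P P a s) ` S))"

definition frame_hom :: "('a, 'z) pos_scheme \<Rightarrow> ('b, 'y) pos_scheme \<Rightarrow> ('a \<Rightarrow> 'b) \<Rightarrow> bool" where
  "frame_hom P Q f \<longleftrightarrow> f ` pcarrier P \<subseteq> pcarrier Q \<and>
     (\<forall>S. S \<subseteq> pcarrier P \<longrightarrow> f (Sup_P P S) = Sup_P Q (f ` S)) \<and>
     (\<forall>a\<in>pcarrier P. \<forall>b\<in>pcarrier P. f (meet_P P a b) = meet_P Q (f a) (f b)) \<and>
     f (top_P P) = top_P Q"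

definition coframe_hom :: "('a, 'z) pos_scheme \<Rightarrow> ('b, 'y) pos_scheme \<Rightarrow> ('a \<Rightarrow> 'b) \<Rightarrow> bool" where
  "coframe_hom P Q f \<longleftrightarrow> f ` pcarrier P \<subseteq> pcarrier Q \<and>
     (\<forall>S. S \<subseteq> pcarrier P \<longrightarrow> f (Inf_P P S) = Inf_P Q (f ` S)) \<and>
     (\<forall>a\<in>pcarrier P. \<forall>b\<in>pcarrier P. f (join_P P a b) = join_P Q (f a) (f b)) \<and>
     f (bot_P P) = bot_P Q"

definition complemented :: "('a, 'z) pos_scheme \<Rightarrow> 'a \<Rightarrow> bool" where
  "complemented P x \<longleftrightarrow> x \<in> pcarrier P \<and>
     (\<exists>y\<in>pcarrier P. meet_P P x y = bot_P P \<and> join_P P x y = top_P P)"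

definition top_coframe :: "'a tcof \<Rightarrow> bool" where
  "top_coframe L \<longleftrightarrow> is_coframe L \<and>
     (\<forall>x\<in>closed L. complemented L x) \<and>
     bot_P L \<in> closed L \<and> top_P L \<in> closed L \<and>
     (\<forall>x\<in>closed L. \<forall>y\<in>closed L. meet_P L x y \<in> closed L \<and> join_P L x y \<in> closed L)"

definition strong_top_coframe :: "'a tcof \<Rightarrow> bool" where
  "strong_top_coframe L \<longleftrightarrow> top_coframe L \<and>
     (\<forall>T. T \<subseteq> closed L \<longrightarrow> Inf_P L T \<in> closed L)"

definition top_coframe_hom :: "'a tcof \<Rightarrow> 'b tcof \<Rightarrow> ('a \<Rightarrow> 'b) \<Rightarrow> bool" where
  "top_coframe_hom L L' g \<longleftrightarrow> coframe_hom L L' g \<and> g ` closed L \<subseteq> closed L'"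

definition meetC :: "'a tcof \<Rightarrow> 'a set" where
  "meetC L = Inf_P L ` Pow (closed L)"

definition meetC_op :: "'a tcof \<Rightarrow> 'a pos" where
  "meetC_op L = \<lparr>pcarrier = meetC L, ple = (\<lambda>x y. ple L y x)\<rparr>"

definition heyting_imp :: "('a, 'z) pos_scheme \<Rightarrow> 'a \<Rightarrow> 'a \<Rightarrow> 'a" where
  "heyting_imp P u s = Sup_P P {x \<in> pcarrier P. ple P (meet_P P x u) s}"

definition is_sublocale :: "('a, 'z) pos_scheme \<Rightarrow> 'a set \<Rightarrow> bool" where
  "is_sublocale P S \<longleftrightarrow> S \<subseteq> pcarrier P \<and>
     (\<forall>T. T \<subseteq> S \<longrightarrow> Inf_P P T \<in> S) \<and>
     (\<forall>u\<in>pcarrier P. \<forall>s\<in>S. heyting_imp P u s \<in> S)"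

definition closed_subl :: "('a, 'z) pos_scheme \<Rightarrow> 'a \<Rightarrow> 'a set" where
  "closed_subl P u = {x \<in> pcarrier P. ple P u x}"

definition Sl :: "('a, 'z) pos_scheme \<Rightarrow> 'a set tcof" where
  "Sl P = \<lparr>pcarrier = {S. is_sublocale P S}, ple = (\<subseteq>), closed = closed_subl P ` pcarrier P\<rparr>"

end

theory Submission
  imports Defs
begin

(* Write c(u) = \<up>u for the closed and o(u) = {x. u \<rightarrow> x = x} for the open sublocale of u, and
   \<nu> S a for the least element of a sublocale S above a. Then c(u) \<inter> o(u) = {\<top>} and
   c(x) \<or> o(y) is the explicit sublocale D(x, y) = {z. y \<rightarrow> z \<le> x \<rightarrow> z}, so c(u) is complemented
   by o(u); moreover every sublocale is S = \<Inter>\<^sub>a D(\<nu> S a, a).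
   A coframe morphism h extending a frame map f from \<Omega> to the closed elements of L must send o(a)
   to the complement of f a, hence is forced to be h S = \<Sqinter>\<^sub>a (f (\<nu> S a) \<squnion> \<not> f a). Conversely this
   formula preserves arbitrary meets, using the Galois adjoint of f and the strongness of L, and
   binary joins, using \<nu> S a \<and> \<nu> T b \<le> \<nu> (S \<or> T) (a \<or> b). *)

section \<open>Complete lattices on a carrier\<close>

lemma Sup_P_eq: "is_poset P \<Longrightarrow> is_lub P S x \<Longrightarrow> Sup_P P S = x"
  unfolding Sup_P_def by (rule the_equality) (auto simp: is_poset_def is_lub_def)

lemma Inf_P_eq: "is_poset P \<Longrightarrow> is_glb P S x \<Longrightarrow> Inf_P P S = x"
  unfolding Inf_P_def by (rule the_equality) (auto simp: is_poset_def is_glb_def)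

locale clattice =
  fixes P :: "('a, 'z) pos_scheme"
  assumes complete: "complete_lat P"
begin

abbreviation carrier where "carrier \<equiv> pcarrier P"
abbreviation le where "le \<equiv> ple P"
abbreviation meet where "meet \<equiv> meet_P P"
abbreviation join where "join \<equiv> join_P P"

lemma poset: "is_poset P"
  using complete by (simp add: complete_lat_def)

lemma le_refl [simp]: "x \<in> carrier \<Longrightarrow> le x x"
  using poset by (simp add: is_poset_def)

lemma le_antisym: "x \<in> carrier \<Longrightarrow> y \<in> carrier \<Longrightarrow> le x y \<Longrightarrow> le y x \<Longrightarrow> x = y"
  using poset unfolding is_poset_def by blast

lemma le_trans:
  "le x y \<Longrightarrow> le y z \<Longrightarrow> x \<in> carrier \<Longrightarrow> y \<in> carrier \<Longrightarrow> z \<in> carrier \<Longrightarrow> le x z"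
  using poset unfolding is_poset_def by blast

lemma Sup_lub: "S \<subseteq> carrier \<Longrightarrow> is_lub P S (Sup_P P S)"
  using complete Sup_P_eq[OF poset] unfolding complete_lat_def by metis

lemma Inf_glb: "S \<subseteq> carrier \<Longrightarrow> is_glb P S (Inf_P P S)"
  using complete Inf_P_eq[OF poset] unfolding complete_lat_def by metis

lemma Sup_in [simp]: "S \<subseteq> carrier \<Longrightarrow> Sup_P P S \<in> carrier"
  using Sup_lub[of S] by (simp add: is_lub_def)

lemma Sup_upper: "S \<subseteq> carrier \<Longrightarrow> s \<in> S \<Longrightarrow> le s (Sup_P P S)"
  using Sup_lub[of S] by (simp add: is_lub_def)

lemma Sup_least:
  "S \<subseteq> carrier \<Longrightarrow> y \<in> carrier \<Longrightarrow> (\<And>s. s \<in> S \<Longrightarrow> le s y) \<Longrightarrow> le (Sup_P P S) y"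
  using Sup_lub[of S] by (simp add: is_lub_def)

lemma Inf_in [simp]: "S \<subseteq> carrier \<Longrightarrow> Inf_P P S \<in> carrier"
  using Inf_glb[of S] by (simp add: is_glb_def)

lemma Inf_lower: "S \<subseteq> carrier \<Longrightarrow> s \<in> S \<Longrightarrow> le (Inf_P P S) s"
  using Inf_glb[of S] by (simp add: is_glb_def)

lemma Inf_greatest:
  "S \<subseteq> carrier \<Longrightarrow> y \<in> carrier \<Longrightarrow> (\<And>s. s \<in> S \<Longrightarrow> le y s) \<Longrightarrow> le y (Inf_P P S)"
  using Inf_glb[of S] by (simp add: is_glb_def)

lemma Sup_eq: "is_lub P S x \<Longrightarrow> Sup_P P S = x"
  by (rule Sup_P_eq[OF poset])

lemma Inf_eq: "is_glb P S x \<Longrightarrow> Inf_P P S = x"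
  by (rule Inf_P_eq[OF poset])

lemma join_in [simp]: "a \<in> carrier \<Longrightarrow> b \<in> carrier \<Longrightarrow> join a b \<in> carrier"
  by (simp add: join_P_def)

lemma meet_in [simp]: "a \<in> carrier \<Longrightarrow> b \<in> carrier \<Longrightarrow> meet a b \<in> carrier"
  by (simp add: meet_P_def)

lemma top_in [simp]: "top_P P \<in> carrier"
  by (simp add: top_P_def)

lemma bot_in [simp]: "bot_P P \<in> carrier"
  by (simp add: bot_P_def)

lemma join_le_iff:
  assumes "a \<in> carrier" "b \<in> carrier" "z \<in> carrier"
  shows "le (join a b) z \<longleftrightarrow> le a z \<and> le b z"
proof -
  have ab: "{a, b} \<subseteq> carrier" using assms by auto
  show ?thesis
    unfolding join_P_def
    using Sup_upper[OF ab] Sup_least[OF ab] le_trans[of _ "Sup_P P {a, b}" z] assms Sup_in[OF ab]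
    by blast
qed

lemma le_meet_iff:
  assumes "a \<in> carrier" "b \<in> carrier" "z \<in> carrier"
  shows "le z (meet a b) \<longleftrightarrow> le z a \<and> le z b"
proof -
  have ab: "{a, b} \<subseteq> carrier" using assms by auto
  show ?thesis
    unfolding meet_P_def
    using Inf_lower[OF ab] Inf_greatest[OF ab] le_trans[of z "Inf_P P {a, b}"] assms Inf_in[OF ab]
    by blast
qed

lemma join_ge1: "a \<in> carrier \<Longrightarrow> b \<in> carrier \<Longrightarrow> le a (join a b)"
  using join_le_iff[of a b "join a b"] by simp

lemma join_ge2: "a \<in> carrier \<Longrightarrow> b \<in> carrier \<Longrightarrow> le b (join a b)"
  using join_le_iff[of a b "join a b"] by simp

lemma meet_le1: "a \<in> carrier \<Longrightarrow> b \<in> carrier \<Longrightarrow> le (meet a b) a"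
  using le_meet_iff[of a b "meet a b"] by simp

lemma meet_le2: "a \<in> carrier \<Longrightarrow> b \<in> carrier \<Longrightarrow> le (meet a b) b"
  using le_meet_iff[of a b "meet a b"] by simp

lemma join_comm: "join a b = join b a"
  by (simp add: join_P_def insert_commute)

lemma meet_comm: "meet a b = meet b a"
  by (simp add: meet_P_def insert_commute)

lemma top_greatest: "x \<in> carrier \<Longrightarrow> le x (top_P P)"
  unfolding top_P_def by (rule Inf_greatest) auto

lemma bot_least: "x \<in> carrier \<Longrightarrow> le (bot_P P) x"
  unfolding bot_P_def by (rule Sup_least) auto

lemma eq_by_lower_bounds:
  "x \<in> carrier \<Longrightarrow> y \<in> carrier \<Longrightarrow> (\<And>z. z \<in> carrier \<Longrightarrow> le z x \<longleftrightarrow> le z y) \<Longrightarrow> x = y"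
  using le_antisym le_refl by metis

lemma meet_assoc:
  "a \<in> carrier \<Longrightarrow> b \<in> carrier \<Longrightarrow> c \<in> carrier \<Longrightarrow> meet (meet a b) c = meet a (meet b c)"
  by (rule eq_by_lower_bounds) (auto simp: le_meet_iff)

lemma meet_mono:
  "le a a' \<Longrightarrow> le b b' \<Longrightarrow> a \<in> carrier \<Longrightarrow> a' \<in> carrier \<Longrightarrow> b \<in> carrier \<Longrightarrow> b' \<in> carrier \<Longrightarrow>
    le (meet a b) (meet a' b')"
  using le_meet_iff[of a' b' "meet a b"] meet_le1[of a b] meet_le2[of a b]
    le_trans[of "meet a b" a a'] le_trans[of "meet a b" b b']
  by simp

lemma join_mono:
  "le a a' \<Longrightarrow> le b b' \<Longrightarrow> a \<in> carrier \<Longrightarrow> a' \<in> carrier \<Longrightarrow> b \<in> carrier \<Longrightarrow> b' \<in> carrier \<Longrightarrow>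
    le (join a b) (join a' b')"
  using join_le_iff[of a b "join a' b'"] join_ge1[of a' b'] join_ge2[of a' b']
    le_trans[of a a' "join a' b'"] le_trans[of b b' "join a' b'"]
  by simp

lemma meet_top: "a \<in> carrier \<Longrightarrow> meet (top_P P) a = a"
  using le_antisym[of "meet (top_P P) a" a] meet_le2[of "top_P P" a]
    le_meet_iff[of "top_P P" a a] top_greatest[of a]
  by simp

lemma join_bot: "a \<in> carrier \<Longrightarrow> join a (bot_P P) = a"
  using le_antisym[of "join a (bot_P P)" a] join_ge1[of a "bot_P P"]
    join_le_iff[of a "bot_P P" a] bot_least[of a]
  by simp

lemma meet_absorb1: "le a b \<Longrightarrow> a \<in> carrier \<Longrightarrow> b \<in> carrier \<Longrightarrow> meet a b = a"
  using le_antisym[of "meet a b" a] meet_le1[of a b] le_meet_iff[of a b a] by simp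

lemma join_absorb2: "le a b \<Longrightarrow> a \<in> carrier \<Longrightarrow> b \<in> carrier \<Longrightarrow> join a b = b"
  using le_antisym[of "join a b" b] join_ge2[of a b] join_le_iff[of a b b] by simp

end

section \<open>Coframes and strong topological coframes\<close>

definition compl_P :: "('a, 'z) pos_scheme \<Rightarrow> 'a \<Rightarrow> 'a" where
  "compl_P P x = (SOME y. y \<in> pcarrier P \<and> meet_P P x y = bot_P P \<and> join_P P x y = top_P P)"

locale coframe = clattice P for P :: "('a, 'z) pos_scheme" +
  assumes join_Inf_distrib:
    "a \<in> carrier \<Longrightarrow> S \<subseteq> carrier \<Longrightarrow> join a (Inf_P P S) = Inf_P P ((\<lambda>s. join a s) ` S)"
begin

lemma join_meet_distrib:
  "a \<in> carrier \<Longrightarrow> b \<in> carrier \<Longrightarrow> c \<in> carrier \<Longrightarrow> join a (meet b c) = meet (join a b) (join a c)"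
  unfolding meet_P_def using join_Inf_distrib[of a "{b, c}"] by simp

lemma le_join_Inf_Inf:
  assumes A: "A \<subseteq> carrier" and B: "B \<subseteq> carrier" and m: "m \<in> carrier"
    and le: "\<And>a b. a \<in> A \<Longrightarrow> b \<in> B \<Longrightarrow> le m (join a b)"
  shows "le m (join (Inf_P P A) (Inf_P P B))"
proof -
  have "le m (join (Inf_P P A) b)" if b: "b \<in> B" for b
  proof -
    have "join (Inf_P P A) b = Inf_P P ((\<lambda>a. join b a) ` A)"
      using join_Inf_distrib[OF _ A] join_comm b B by auto
    also have "le m \<dots>"
      using le A B b m by (intro Inf_greatest) (auto simp: join_comm intro!: join_in)
    finally show ?thesis .
  qed
  then show ?thesis
    using join_Inf_distrib[OF _ B] A B m by (auto intro!: Inf_greatest join_in)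
qed

lemma complement_compl_P:
  assumes "complemented P x"
  shows "compl_P P x \<in> carrier" "meet x (compl_P P x) = bot_P P" "join x (compl_P P x) = top_P P"
proof -
  have "\<exists>y. y \<in> carrier \<and> meet x y = bot_P P \<and> join x y = top_P P"
    using assms unfolding complemented_def by blast
  then have "compl_P P x \<in> carrier \<and> meet x (compl_P P x) = bot_P P \<and> join x (compl_P P x) = top_P P"
    unfolding compl_P_def by (rule someI_ex)
  then show "compl_P P x \<in> carrier" "meet x (compl_P P x) = bot_P P" "join x (compl_P P x) = top_P P"
    by auto
qed

lemma compl_le:
  assumes x: "x \<in> carrier" and y: "y \<in> carrier" and y': "y' \<in> carrier"
    and bot: "meet x y' = bot_P P" and top: "join x y = top_P P"
  shows "le y' y"
proof -
  have "y = join y (meet x y')"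
    using y bot join_bot by simp
  also have "\<dots> = meet (join y x) (join y y')"
    using join_meet_distrib x y y' by simp
  also have "\<dots> = join y y'"
    using top join_comm[of y x] meet_top y y' by simp
  finally show ?thesis
    using join_ge2[OF y y'] by simp
qed

lemma compl_unique:
  assumes "x \<in> carrier" "y \<in> carrier" "y' \<in> carrier"
    and "meet x y = bot_P P" "join x y = top_P P" "meet x y' = bot_P P" "join x y' = top_P P"
  shows "y = y'"
  using assms compl_le[of x y y'] compl_le[of x y' y] le_antisym[of y y'] by blast

lemma compl_P_unique:
  assumes x: "complemented P x" and "y \<in> carrier" "meet x y = bot_P P" "join x y = top_P P"
  shows "compl_P P x = y"
proof -
  have "x \<in> carrier"
    using x unfolding complemented_def by blast
  with complement_compl_P[OF x] assms show ?thesis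
    by (auto intro: compl_unique[of x "compl_P P x" y])
qed

lemma compl_P_top: "compl_P P (top_P P) = bot_P P"
proof -
  have "meet (top_P P) (bot_P P) = bot_P P" "join (top_P P) (bot_P P) = top_P P"
    using meet_top join_bot by simp_all
  moreover from this have "complemented P (top_P P)"
    unfolding complemented_def by (intro conjI bexI[of _ "bot_P P"]) simp_all
  ultimately show ?thesis
    by (intro compl_P_unique) simp_all
qed

lemma meet_le_iff_le_join_compl:
  assumes c: "complemented P c" and x: "x \<in> carrier" and y: "y \<in> carrier"
  shows "le (meet x c) y \<longleftrightarrow> le x (join y (compl_P P c))"
proof -
  have cC: "c \<in> carrier"
    using c unfolding complemented_def by blast
  define c' where "c' = compl_P P c"
  have c': "c' \<in> carrier" "meet c c' = bot_P P" "join c' c = top_P P"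
    using complement_compl_P[OF c] join_comm[of c' c] by (simp_all add: c'_def)
  show ?thesis
    unfolding c'_def[symmetric]
  proof
    assume le: "le (meet x c) y"
    have "join c' (meet x c) = meet (join c' x) (join c' c)"
      using join_meet_distrib c' cC x by simp
    also have "\<dots> = join c' x"
      using c' x meet_comm[of _ "top_P P"] meet_top by simp
    finally have "join c' (meet x c) = join c' x" .
    moreover have "le (join c' (meet x c)) (join c' y)"
      using join_mono[OF le_refl le] c' cC x y by simp
    ultimately have "le (join c' x) (join c' y)"
      by simp
    then have "le x (join c' y)"
      using le_trans[OF join_ge2[of c' x]] c' x y by simp
    then show "le x (join y c')"
      by (simp add: join_comm)
  next
    assume le: "le x (join y c')"
    have "le (meet x c) (meet (join y c') (join y c))"
      using meet_mono[OF le join_ge2[OF y cC]] c' cC x y by simp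
    also have "meet (join y c') (join y c) = join y (meet c' c)"
      using join_meet_distrib c' cC y by simp
    also have "\<dots> = y"
      using c' y meet_comm[of c' c] join_bot by simp
    finally show "le (meet x c) y" .
  qed
qed

end

locale strong_tcoframe = coframe L for L :: "'b tcof" +
  assumes strong: "strong_top_coframe L"

lemma strong_tcoframe_if_strong_top_coframe: "strong_top_coframe L \<Longrightarrow> strong_tcoframe L"
  unfolding strong_tcoframe_def strong_tcoframe_axioms_def coframe_def coframe_axioms_def
    clattice_def strong_top_coframe_def top_coframe_def is_coframe_def
  by blast

context strong_tcoframe
begin

lemma top_coframe: "top_coframe L"
  using strong unfolding strong_top_coframe_def by simp

lemma closed_complemented: "x \<in> closed L \<Longrightarrow> complemented L x"
  using top_coframe unfolding top_coframe_def by blast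

lemma closed_subset: "closed L \<subseteq> carrier"
  using closed_complemented unfolding complemented_def by blast

lemma closed_Inf: "T \<subseteq> closed L \<Longrightarrow> Inf_P L T \<in> closed L"
  using strong unfolding strong_top_coframe_def by blast

lemma closed_join: "x \<in> closed L \<Longrightarrow> y \<in> closed L \<Longrightarrow> join x y \<in> closed L"
  using top_coframe unfolding top_coframe_def by blast

lemma closed_bot: "bot_P L \<in> closed L"
  using top_coframe unfolding top_coframe_def by blast

lemma meetC_eq_closed: "meetC L = closed L"
proof
  show "meetC L \<subseteq> closed L"
    unfolding meetC_def using closed_Inf by auto
  show "closed L \<subseteq> meetC L"
  proof
    fix x assume x: "x \<in> closed L"
    then have "Inf_P L {x} = x"
      using closed_subset by (intro Inf_eq) (auto simp: is_glb_def)
    then show "x \<in> meetC L"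
      unfolding meetC_def using x by (metis Pow_iff empty_subsetI image_eqI insert_subset)
  qed
qed

lemma meetC_op_eq: "meetC_op L = \<lparr>pcarrier = closed L, ple = (\<lambda>x y. le y x)\<rparr>"
  unfolding meetC_op_def meetC_eq_closed by simp

lemma is_poset_meetC_op: "is_poset (meetC_op L)"
  unfolding meetC_op_eq is_poset_def
proof (simp, intro conjI ballI impI)
  fix x y z assume "x \<in> closed L" "y \<in> closed L" "z \<in> closed L"
  then have xyz: "x \<in> carrier" "y \<in> carrier" "z \<in> carrier"
    using closed_subset by auto
  show "le x x"
    using xyz by simp
  show "x = y" if "le y x \<and> le x y"
    using that xyz le_antisym by blast
  show "le z x" if "le y x \<and> le z y"
    using that xyz le_trans by blast
qed

lemma pcarrier_meetC_op: "pcarrier (meetC_op L) = closed L"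
  by (simp add: meetC_op_eq)

lemma Sup_meetC_op:
  assumes T: "T \<subseteq> closed L"
  shows "Sup_P (meetC_op L) T = Inf_P L T"
proof (rule Sup_P_eq[OF is_poset_meetC_op])
  have "T \<subseteq> carrier"
    using T closed_subset by blast
  then show "is_lub (meetC_op L) T (Inf_P L T)"
    using T closed_subset closed_Inf Inf_lower Inf_greatest by (auto simp: is_lub_def meetC_op_eq)
qed

lemma meet_meetC_op:
  assumes "x \<in> closed L" "y \<in> closed L"
  shows "meet_P (meetC_op L) x y = join x y"
  unfolding meet_P_def
proof (rule Inf_P_eq[OF is_poset_meetC_op])
  have "x \<in> carrier" "y \<in> carrier"
    using assms closed_subset by auto
  then show "is_glb (meetC_op L) {x, y} (join x y)"
    using assms closed_subset closed_join join_le_iff join_ge1 join_ge2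
    by (auto simp: is_glb_def meetC_op_eq)
qed

lemma top_meetC_op: "top_P (meetC_op L) = bot_P L"
  unfolding top_P_def using closed_subset closed_bot bot_least
  by (intro Inf_P_eq[OF is_poset_meetC_op]) (auto simp: is_glb_def meetC_op_eq)

lemma frame_hom_meetC_op_iff:
  "frame_hom P (meetC_op L) f \<longleftrightarrow>
    f ` pcarrier P \<subseteq> closed L \<and>
    (\<forall>S. S \<subseteq> pcarrier P \<longrightarrow> f (Sup_P P S) = Inf_P L (f ` S)) \<and>
    (\<forall>a\<in>pcarrier P. \<forall>b\<in>pcarrier P. f (meet_P P a b) = join (f a) (f b)) \<and>
    f (top_P P) = bot_P L"
proof -
  have "f ` S \<subseteq> closed L" if "f ` pcarrier P \<subseteq> closed L" "S \<subseteq> pcarrier P" for S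
    using that by blast
  moreover have "f a \<in> closed L" if "f ` pcarrier P \<subseteq> closed L" "a \<in> pcarrier P" for a
    using that by blast
  ultimately show ?thesis
    unfolding frame_hom_def top_meetC_op pcarrier_meetC_op
    by (auto simp: Sup_meetC_op meet_meetC_op)
qed

end

section \<open>Frames and Heyting implication\<close>

locale frame = clattice \<Omega> for \<Omega> :: "('a, 'z) pos_scheme" +
  assumes meet_Sup_distrib:
    "a \<in> carrier \<Longrightarrow> S \<subseteq> carrier \<Longrightarrow> meet a (Sup_P \<Omega> S) = Sup_P \<Omega> ((\<lambda>s. meet a s) ` S)"

lemma frame_if_is_frame: "is_frame \<Omega> \<Longrightarrow> frame \<Omega>"
  unfolding is_frame_def frame_def frame_axioms_def clattice_def by blast

context frame
begin

abbreviation imp where "imp \<equiv> heyting_imp \<Omega>"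

lemma meet_join_distrib:
  "a \<in> carrier \<Longrightarrow> b \<in> carrier \<Longrightarrow> c \<in> carrier \<Longrightarrow> meet a (join b c) = join (meet a b) (meet a c)"
  unfolding join_P_def using meet_Sup_distrib[of a "{b, c}"] by simp

lemma imp_in [simp]: "imp u s \<in> carrier"
  unfolding heyting_imp_def by (rule Sup_in) auto

lemma le_imp_iff:
  assumes u: "u \<in> carrier" and s: "s \<in> carrier" and x: "x \<in> carrier"
  shows "le x (imp u s) \<longleftrightarrow> le (meet x u) s"
proof
  assume "le (meet x u) s"
  then show "le x (imp u s)"
    unfolding heyting_imp_def using x by (intro Sup_upper) auto
next
  assume x_le: "le x (imp u s)"
  define X where "X = {x \<in> carrier. le (meet x u) s}"
  have X: "X \<subseteq> carrier"
    unfolding X_def by auto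
  have "le (meet x u) (meet (imp u s) u)"
    using meet_mono[OF x_le le_refl[OF u]] u x by simp
  also have "meet (imp u s) u = Sup_P \<Omega> ((\<lambda>y. meet u y) ` X)"
    unfolding heyting_imp_def X_def[symmetric] using meet_Sup_distrib[OF u X] by (simp add: meet_comm)
  finally have "le (meet x u) (Sup_P \<Omega> ((\<lambda>y. meet u y) ` X))" .
  moreover have "le (Sup_P \<Omega> ((\<lambda>y. meet u y) ` X)) s"
    using X u s by (intro Sup_least) (auto simp: X_def meet_comm)
  ultimately show "le (meet x u) s"
    by (rule le_trans) (use X u x s in \<open>auto intro!: Sup_in\<close>)
qed

lemma le_imp_right: "u \<in> carrier \<Longrightarrow> s \<in> carrier \<Longrightarrow> le s (imp u s)"
  using le_imp_iff meet_le1 by simp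

lemma imp_meet_le: "u \<in> carrier \<Longrightarrow> s \<in> carrier \<Longrightarrow> le (meet (imp u s) u) s"
  using le_imp_iff[of u s "imp u s"] by simp

lemma imp_mono_right:
  "u \<in> carrier \<Longrightarrow> s \<in> carrier \<Longrightarrow> s' \<in> carrier \<Longrightarrow> le s s' \<Longrightarrow> le (imp u s) (imp u s')"
  using le_imp_iff[of u s' "imp u s"] imp_meet_le[of u s] le_trans[of "meet (imp u s) u" s s'] by simp

lemma top_le_imp_iff: "u \<in> carrier \<Longrightarrow> s \<in> carrier \<Longrightarrow> le (top_P \<Omega>) (imp u s) \<longleftrightarrow> le u s"
  using le_imp_iff[of u s "top_P \<Omega>"] meet_top by simp

lemma imp_eq_top_iff: "u \<in> carrier \<Longrightarrow> s \<in> carrier \<Longrightarrow> imp u s = top_P \<Omega> \<longleftrightarrow> le u s"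
  using top_le_imp_iff[of u s] le_antisym[of "imp u s" "top_P \<Omega>"] top_greatest[of "imp u s"] by auto

lemma imp_commute:
  assumes "u \<in> carrier" "w \<in> carrier" "x \<in> carrier"
  shows "imp u (imp w x) = imp w (imp u x)"
proof (rule eq_by_lower_bounds)
  fix z assume z: "z \<in> carrier"
  have "le z (imp u (imp w x)) \<longleftrightarrow> le (meet (meet z u) w) x"
    using assms z le_imp_iff by simp
  also have "meet (meet z u) w = meet (meet z w) u"
    using assms z meet_assoc[of z u w] meet_assoc[of z w u] meet_comm[of u w] by simp
  also have "le \<dots> x \<longleftrightarrow> le z (imp w (imp u x))"
    using assms z le_imp_iff by simp
  finally show "le z (imp u (imp w x)) \<longleftrightarrow> le z (imp w (imp u x))" .
qed simp_all

lemma imp_imp_self: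
  assumes "u \<in> carrier" "x \<in> carrier"
  shows "imp u (imp u x) = imp u x"
proof (rule eq_by_lower_bounds)
  fix z assume z: "z \<in> carrier"
  have "le z (imp u (imp u x)) \<longleftrightarrow> le (meet (meet z u) u) x"
    using assms z le_imp_iff by simp
  also have "meet (meet z u) u = meet z u"
    using assms z meet_assoc meet_absorb1[of u u] by simp
  also have "le \<dots> x \<longleftrightarrow> le z (imp u x)"
    using assms z le_imp_iff by simp
  finally show "le z (imp u (imp u x)) \<longleftrightarrow> le z (imp u x)" .
qed simp_all

lemma imp_meet_self:
  assumes "s \<in> carrier" "t \<in> carrier"
  shows "imp s (meet s t) = imp s t"
proof (rule eq_by_lower_bounds)
  fix z assume z: "z \<in> carrier"
  have "le z (imp s (meet s t)) \<longleftrightarrow> le (meet z s) (meet s t)"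
    using assms z le_imp_iff by simp
  also have "\<dots> \<longleftrightarrow> le (meet z s) t"
    using assms z le_meet_iff meet_le2 by auto
  also have "\<dots> \<longleftrightarrow> le z (imp s t)"
    using assms z le_imp_iff by simp
  finally show "le z (imp s (meet s t)) \<longleftrightarrow> le z (imp s t)" .
qed simp_all

lemma imp_meet_distrib:
  assumes "w \<in> carrier" "a \<in> carrier" "b \<in> carrier"
  shows "imp w (meet a b) = meet (imp w a) (imp w b)"
  using assms by (intro eq_by_lower_bounds) (simp_all add: le_imp_iff le_meet_iff)

lemma meet_imp_eq: "s \<in> carrier \<Longrightarrow> x \<in> carrier \<Longrightarrow> le x s \<Longrightarrow> meet s (imp s x) = x"
  using le_antisym[of "meet s (imp s x)" x] imp_meet_le[of s x] meet_comm[of s]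
    le_meet_iff[of s "imp s x" x] le_imp_right[of s x]
  by simp

end

section \<open>Sublocales\<close>

definition nucleus :: "('a, 'z) pos_scheme \<Rightarrow> 'a set \<Rightarrow> 'a \<Rightarrow> 'a" where
  "nucleus P S a = Inf_P P {s \<in> S. ple P a s}"

lemma Sl_simps [simp]:
  "pcarrier (Sl P) = {S. is_sublocale P S}" "ple (Sl P) = (\<subseteq>)"
  "closed (Sl P) = closed_subl P ` pcarrier P"
  by (simp_all add: Sl_def)

lemma is_poset_Sl: "is_poset (Sl P)"
  unfolding is_poset_def by auto

context frame
begin

abbreviation subl where "subl \<equiv> is_sublocale \<Omega>"
abbreviation nu where "nu \<equiv> nucleus \<Omega>"

lemma sublocale_subset: "subl S \<Longrightarrow> S \<subseteq> carrier"
  by (simp add: is_sublocale_def)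

lemma sublocale_Inf: "subl S \<Longrightarrow> T \<subseteq> S \<Longrightarrow> Inf_P \<Omega> T \<in> S"
  by (simp add: is_sublocale_def)

lemma sublocale_imp: "subl S \<Longrightarrow> u \<in> carrier \<Longrightarrow> s \<in> S \<Longrightarrow> imp u s \<in> S"
  by (simp add: is_sublocale_def)

lemma sublocale_top: "subl S \<Longrightarrow> top_P \<Omega> \<in> S"
  unfolding top_P_def using sublocale_Inf by blast

lemma sublocale_meet: "subl S \<Longrightarrow> s \<in> S \<Longrightarrow> t \<in> S \<Longrightarrow> meet s t \<in> S"
  unfolding meet_P_def using sublocale_Inf by simp

lemma sublocale_Int: "(\<And>U. U \<in> UU \<Longrightarrow> subl U) \<Longrightarrow> subl (carrier \<inter> \<Inter>UU)"
  unfolding is_sublocale_def by (auto intro!: Inf_in) (meson le_infI2 le_Inf_iff order_refl)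

lemma sublocale_top_singleton: "subl {top_P \<Omega>}"
  unfolding is_sublocale_def
proof (intro conjI allI impI ballI)
  fix T assume "T \<subseteq> {top_P \<Omega>}"
  moreover have "Inf_P \<Omega> {top_P \<Omega>} = top_P \<Omega>"
    by (rule Inf_eq) (simp add: is_glb_def top_greatest)
  ultimately show "Inf_P \<Omega> T \<in> {top_P \<Omega>}"
    by (auto simp: subset_singleton_iff top_P_def)
next
  fix u s assume "u \<in> carrier" "s \<in> {top_P \<Omega>}"
  then show "imp u s \<in> {top_P \<Omega>}"
    using imp_eq_top_iff top_greatest by simp
qed simp

lemma nucleus_in: "subl S \<Longrightarrow> nu S a \<in> S"
  unfolding nucleus_def using sublocale_Inf by simp

lemma nucleus_in_carrier [simp]: "subl S \<Longrightarrow> nu S a \<in> carrier"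
  using nucleus_in sublocale_subset by blast

lemma le_nucleus: "subl S \<Longrightarrow> a \<in> carrier \<Longrightarrow> le a (nu S a)"
  unfolding nucleus_def by (rule Inf_greatest) (auto dest: sublocale_subset)

lemma nucleus_least: "subl S \<Longrightarrow> s \<in> S \<Longrightarrow> le a s \<Longrightarrow> le (nu S a) s"
  unfolding nucleus_def by (rule Inf_lower) (auto dest: sublocale_subset)

lemma nucleus_eq_iff: "subl S \<Longrightarrow> x \<in> carrier \<Longrightarrow> nu S x = x \<longleftrightarrow> x \<in> S"
  using nucleus_in nucleus_least le_nucleus le_antisym le_refl by (metis nucleus_in_carrier)

lemma nucleus_le_iff: "subl S \<Longrightarrow> x \<in> carrier \<Longrightarrow> le (nu S x) x \<longleftrightarrow> x \<in> S"
  using nucleus_eq_iff le_nucleus le_antisym le_refl by (metis nucleus_in_carrier)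

lemma nucleus_antimono: "subl S \<Longrightarrow> subl T \<Longrightarrow> S \<subseteq> T \<Longrightarrow> a \<in> carrier \<Longrightarrow> le (nu T a) (nu S a)"
  using nucleus_least[OF _ _ le_nucleus] nucleus_in by blast

lemma nucleus_mono:
  "subl S \<Longrightarrow> a \<in> carrier \<Longrightarrow> b \<in> carrier \<Longrightarrow> le a b \<Longrightarrow> le (nu S a) (nu S b)"
  using nucleus_least[OF _ nucleus_in] le_trans[OF _ le_nucleus] by simp

lemma Sl_glb: "SS \<subseteq> pcarrier (Sl \<Omega>) \<Longrightarrow> is_glb (Sl \<Omega>) SS (carrier \<inter> \<Inter>SS)"
  unfolding is_glb_def using sublocale_Int[of SS] sublocale_subset by auto

lemma Sl_lub:
  assumes SS: "SS \<subseteq> pcarrier (Sl \<Omega>)"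
  shows "is_lub (Sl \<Omega>) SS (carrier \<inter> \<Inter>{U. subl U \<and> \<Union>SS \<subseteq> U})"
proof -
  have "S \<subseteq> carrier" if "S \<in> SS" for S
    using that SS sublocale_subset by auto
  then show ?thesis
    unfolding is_lub_def using sublocale_Int[of "{U. subl U \<and> \<Union>SS \<subseteq> U}"]
    by (auto simp: Sup_le_iff)
qed

lemma complete_lat_Sl: "complete_lat (Sl \<Omega>)"
  unfolding complete_lat_def using is_poset_Sl Sl_glb Sl_lub by blast

end

sublocale frame \<subseteq> SL: clattice "Sl \<Omega>"
  by unfold_locales (rule complete_lat_Sl)

context frame
begin

lemma Inf_Sl: "SS \<subseteq> pcarrier (Sl \<Omega>) \<Longrightarrow> Inf_P (Sl \<Omega>) SS = carrier \<inter> \<Inter>SS"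
  by (rule SL.Inf_eq[OF Sl_glb])

lemma meet_Sl: "subl S \<Longrightarrow> subl T \<Longrightarrow> SL.meet S T = S \<inter> T"
  unfolding meet_P_def using Inf_Sl[of "{S, T}"] sublocale_subset by auto

lemma top_Sl: "top_P (Sl \<Omega>) = carrier"
  unfolding top_P_def using Inf_Sl[of "{}"] by simp

lemma bot_Sl: "bot_P (Sl \<Omega>) = {top_P \<Omega>}"
  unfolding bot_P_def
  by (rule SL.Sup_eq) (auto simp: is_lub_def sublocale_top_singleton sublocale_top)

lemma join_Sl_eq:
  "subl S \<Longrightarrow> subl T \<Longrightarrow> subl V \<Longrightarrow> S \<subseteq> V \<Longrightarrow> T \<subseteq> V \<Longrightarrow>
    (\<And>U. subl U \<Longrightarrow> S \<subseteq> U \<Longrightarrow> T \<subseteq> U \<Longrightarrow> V \<subseteq> U) \<Longrightarrow> SL.join S T = V"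
  unfolding join_P_def by (rule SL.Sup_eq) (auto simp: is_lub_def)

lemma join_Sl_sublocale: "subl S \<Longrightarrow> subl T \<Longrightarrow> subl (SL.join S T)"
  using SL.join_in by simp

lemma join_Sl_upper1: "subl S \<Longrightarrow> subl T \<Longrightarrow> S \<subseteq> SL.join S T"
  using SL.join_ge1 by simp

lemma join_Sl_upper2: "subl S \<Longrightarrow> subl T \<Longrightarrow> T \<subseteq> SL.join S T"
  using SL.join_ge2 by simp

lemma join_Sl_least:
  "subl S \<Longrightarrow> subl T \<Longrightarrow> subl U \<Longrightarrow> S \<subseteq> U \<Longrightarrow> T \<subseteq> U \<Longrightarrow> SL.join S T \<subseteq> U"
  using SL.join_le_iff[of S T U] by simp

end

section \<open>Closed and open sublocales\<close>

definition open_subl :: "('a, 'z) pos_scheme \<Rightarrow> 'a \<Rightarrow> 'a set" where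
  "open_subl P u = {x \<in> pcarrier P. heyting_imp P u x = x}"

definition closed_open_join :: "('a, 'z) pos_scheme \<Rightarrow> 'a \<Rightarrow> 'a \<Rightarrow> 'a set" where
  "closed_open_join P x y = {z \<in> pcarrier P. ple P (heyting_imp P y z) (heyting_imp P x z)}"

context frame
begin

lemma sublocale_closed_subl:
  assumes u: "u \<in> carrier"
  shows "subl (closed_subl \<Omega> u)"
  unfolding is_sublocale_def closed_subl_def
proof (intro conjI allI impI ballI)
  fix T assume T: "T \<subseteq> {x \<in> carrier. le u x}"
  then have "T \<subseteq> carrier"
    by auto
  then show "Inf_P \<Omega> T \<in> {x \<in> carrier. le u x}"
    using T u by (auto intro: Inf_greatest)
next
  fix w x assume "w \<in> carrier" "x \<in> {x \<in> carrier. le u x}"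
  then show "imp w x \<in> {x \<in> carrier. le u x}"
    using u le_trans[OF _ le_imp_right] by auto
qed auto

lemma sublocale_open_subl:
  assumes u: "u \<in> carrier"
  shows "subl (open_subl \<Omega> u)"
  unfolding is_sublocale_def
proof (intro conjI allI impI ballI)
  fix T assume T: "T \<subseteq> open_subl \<Omega> u"
  then have TC: "T \<subseteq> carrier"
    unfolding open_subl_def by blast
  have "le (imp u (Inf_P \<Omega> T)) t" if t: "t \<in> T" for t
  proof -
    have "le (imp u (Inf_P \<Omega> T)) (imp u t)"
      using imp_mono_right[OF u _ _ Inf_lower[OF TC t]] TC t by auto
    then show ?thesis
      using t T unfolding open_subl_def by auto
  qed
  then have "le (imp u (Inf_P \<Omega> T)) (Inf_P \<Omega> T)"
    using TC by (intro Inf_greatest) auto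
  then show "Inf_P \<Omega> T \<in> open_subl \<Omega> u"
    using le_antisym le_imp_right[OF u] TC unfolding open_subl_def by simp
next
  fix w x assume "w \<in> carrier" "x \<in> open_subl \<Omega> u"
  then show "imp w x \<in> open_subl \<Omega> u"
    using imp_commute[OF u] unfolding open_subl_def by auto
qed (auto simp: open_subl_def)

lemma sublocale_closed_open_join:
  assumes x: "x \<in> carrier" and y: "y \<in> carrier"
  shows "subl (closed_open_join \<Omega> x y)"
  unfolding is_sublocale_def
proof (intro conjI allI impI ballI)
  fix T assume T: "T \<subseteq> closed_open_join \<Omega> x y"
  then have TC: "T \<subseteq> carrier"
    unfolding closed_open_join_def by blast
  let ?I = "Inf_P \<Omega> T"
  have "le (meet (imp y ?I) x) t" if t: "t \<in> T" for t
  proof -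
    have tC: "t \<in> carrier" and "le (imp y t) (imp x t)"
      using t T unfolding closed_open_join_def by auto
    moreover have "le (imp y ?I) (imp y t)"
      using imp_mono_right[OF y _ tC Inf_lower[OF TC t]] TC by simp
    ultimately have "le (imp y ?I) (imp x t)"
      using le_trans[of _ "imp y t"] by simp
    then show ?thesis
      using le_imp_iff[OF x tC] by simp
  qed
  then have "le (meet (imp y ?I) x) ?I"
    using x TC by (intro Inf_greatest) auto
  then show "?I \<in> closed_open_join \<Omega> x y"
    using le_imp_iff[OF x] TC unfolding closed_open_join_def by simp
next
  fix w z assume w: "w \<in> carrier" and "z \<in> closed_open_join \<Omega> x y"
  then have zC: "z \<in> carrier" and "le (imp y z) (imp x z)"
    unfolding closed_open_join_def by auto
  then have "le (imp w (imp y z)) (imp w (imp x z))"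
    using imp_mono_right[OF w] by simp
  then show "imp w z \<in> closed_open_join \<Omega> x y"
    using imp_commute[OF y w zC] imp_commute[OF w x zC] zC unfolding closed_open_join_def by simp
qed (auto simp: closed_open_join_def)

lemma closed_subl_subset_closed_open_join:
  "x \<in> carrier \<Longrightarrow> y \<in> carrier \<Longrightarrow> closed_subl \<Omega> x \<subseteq> closed_open_join \<Omega> x y"
proof
  fix z assume "x \<in> carrier" "y \<in> carrier" "z \<in> closed_subl \<Omega> x"
  then show "z \<in> closed_open_join \<Omega> x y"
    using imp_eq_top_iff[of x z] top_greatest unfolding closed_subl_def closed_open_join_def by auto
qed

lemma open_subl_subset_closed_open_join:
  "x \<in> carrier \<Longrightarrow> y \<in> carrier \<Longrightarrow> open_subl \<Omega> y \<subseteq> closed_open_join \<Omega> x y"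
  unfolding open_subl_def closed_open_join_def using le_imp_right by auto

text \<open>Every z in D(x, y) is the meet (x \<or> z) \<and> (y \<rightarrow> z) of an element of c(x) and an
  element of o(y).\<close>
lemma closed_open_join_least:
  assumes x: "x \<in> carrier" and y: "y \<in> carrier"
    and U: "subl U" "closed_subl \<Omega> x \<subseteq> U" "open_subl \<Omega> y \<subseteq> U"
  shows "closed_open_join \<Omega> x y \<subseteq> U"
proof
  fix z assume "z \<in> closed_open_join \<Omega> x y"
  then have zC: "z \<in> carrier" and zD: "le (imp y z) (imp x z)"
    unfolding closed_open_join_def by auto
  have "join x z \<in> U"
    using U join_ge1[OF x zC] x zC unfolding closed_subl_def by auto
  moreover have "imp y z \<in> U"
    using U imp_imp_self[OF y zC] unfolding open_subl_def by auto
  moreover have "meet (join x z) (imp y z) = z"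
  proof (rule le_antisym)
    have "meet (join x z) (imp y z) = join (meet (imp y z) x) (meet (imp y z) z)"
      using meet_comm meet_join_distrib[of "imp y z" x z] x zC by simp
    moreover have "le (meet (imp y z) x) z"
      using le_imp_iff[OF x zC, of "imp y z"] zD by simp
    ultimately show "le (meet (join x z) (imp y z)) z"
      using join_le_iff meet_le2 x zC by simp
    show "le z (meet (join x z) (imp y z))"
      using le_meet_iff join_ge2[OF x zC] le_imp_right[OF y zC] x zC by simp
  qed (use x y zC in simp_all)
  ultimately show "z \<in> U"
    using sublocale_meet[OF U(1)] by metis
qed

lemma join_closed_open:
  "x \<in> carrier \<Longrightarrow> y \<in> carrier \<Longrightarrow>
    SL.join (closed_subl \<Omega> x) (open_subl \<Omega> y) = closed_open_join \<Omega> x y"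
  by (rule join_Sl_eq)
    (simp_all add: sublocale_closed_subl sublocale_open_subl sublocale_closed_open_join
      closed_subl_subset_closed_open_join open_subl_subset_closed_open_join closed_open_join_least)

lemma closed_open_join_self: "u \<in> carrier \<Longrightarrow> closed_open_join \<Omega> u u = carrier"
  unfolding closed_open_join_def by auto

lemma closed_open_join_le:
  assumes "x \<in> carrier" "y \<in> carrier" "z \<in> closed_open_join \<Omega> x y" "le y z"
  shows "le x z"
proof -
  have "imp y z = top_P \<Omega>" "le (imp y z) (imp x z)"
    using assms imp_eq_top_iff unfolding closed_open_join_def by auto
  then show ?thesis
    using assms top_le_imp_iff unfolding closed_open_join_def by auto
qed

lemma closed_Int_open:
  assumes u: "u \<in> carrier"
  shows "closed_subl \<Omega> u \<inter> open_subl \<Omega> u = {top_P \<Omega>}"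
proof -
  have "x = top_P \<Omega> \<longleftrightarrow> le u x \<and> imp u x = x" if "x \<in> carrier" for x
    using that u imp_eq_top_iff[of u x] imp_eq_top_iff[of u "top_P \<Omega>"] top_greatest by auto
  then show ?thesis
    unfolding closed_subl_def open_subl_def using top_in by blast
qed

lemma closed_Int_closed:
  "a \<in> carrier \<Longrightarrow> b \<in> carrier \<Longrightarrow> closed_subl \<Omega> a \<inter> closed_subl \<Omega> b = closed_subl \<Omega> (join a b)"
  unfolding closed_subl_def using join_le_iff by auto

lemma closed_subl_top: "closed_subl \<Omega> (top_P \<Omega>) = bot_P (Sl \<Omega>)"
  unfolding bot_Sl closed_subl_def using le_antisym top_greatest by auto

lemma closed_subl_bot: "closed_subl \<Omega> (bot_P \<Omega>) = top_P (Sl \<Omega>)"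
  unfolding top_Sl closed_subl_def using bot_least by auto

lemma closed_subl_subset_iff:
  "u \<in> carrier \<Longrightarrow> v \<in> carrier \<Longrightarrow> closed_subl \<Omega> u \<subseteq> closed_subl \<Omega> v \<longleftrightarrow> le v u"
  unfolding closed_subl_def using le_trans[of v u] by auto

lemma inj_on_closed_subl: "inj_on (closed_subl \<Omega>) carrier"
  using closed_subl_subset_iff le_antisym by (intro inj_onI) (metis order_refl)

text \<open>By distributivity every z \<ge> a \<and> b is the meet (z \<or> a) \<and> (z \<or> b) of an element of c(a)
  and an element of c(b).\<close>
lemma join_closed_closed:
  assumes a: "a \<in> carrier" and b: "b \<in> carrier"
  shows "SL.join (closed_subl \<Omega> a) (closed_subl \<Omega> b) = closed_subl \<Omega> (meet a b)"
proof (rule join_Sl_eq)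
  show "closed_subl \<Omega> a \<subseteq> closed_subl \<Omega> (meet a b)" "closed_subl \<Omega> b \<subseteq> closed_subl \<Omega> (meet a b)"
    using closed_subl_subset_iff meet_le1 meet_le2 a b by auto
  fix U assume U: "subl U" "closed_subl \<Omega> a \<subseteq> U" "closed_subl \<Omega> b \<subseteq> U"
  show "closed_subl \<Omega> (meet a b) \<subseteq> U"
  proof
    fix z assume "z \<in> closed_subl \<Omega> (meet a b)"
    then have z: "z \<in> carrier" "le (meet a b) z"
      unfolding closed_subl_def by auto
    have "join z a \<in> U" "join z b \<in> U"
      using U join_ge2 z a b unfolding closed_subl_def by auto
    moreover have "meet (join z a) (join z b) = z"
    proof (rule le_antisym)
      have "meet (join z a) (join z b) = join (meet (join z a) z) (meet (join z a) b)"
        using meet_join_distrib z a b by simp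
      moreover have "meet (join z a) b = join (meet b z) (meet b a)"
        using meet_comm meet_join_distrib z a b by simp
      moreover have "le (meet b z) z" "le (meet b a) z" "le (meet (join z a) z) z"
        using meet_le2 z a b meet_comm[of b a] by simp_all
      ultimately show "le (meet (join z a) (join z b)) z"
        using join_le_iff z a b by simp
      show "le z (meet (join z a) (join z b))"
        using le_meet_iff join_ge1 z a b by simp
    qed (use z a b in simp_all)
    ultimately show "z \<in> U"
      using sublocale_meet[OF U(1)] by metis
  qed
qed (use a b sublocale_closed_subl in simp_all)

lemma Inf_Sl_closed_subl:
  assumes A: "A \<subseteq> carrier"
  shows "Inf_P (Sl \<Omega>) (closed_subl \<Omega> ` A) = closed_subl \<Omega> (Sup_P \<Omega> A)"
proof -
  have "Inf_P (Sl \<Omega>) (closed_subl \<Omega> ` A) = carrier \<inter> \<Inter>(closed_subl \<Omega> ` A)"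
    using A sublocale_closed_subl by (intro Inf_Sl) auto
  also have "\<dots> = closed_subl \<Omega> (Sup_P \<Omega> A)"
    unfolding closed_subl_def using A Sup_least Sup_upper le_trans[OF Sup_upper[OF A]]
    by (auto 0 3)
  finally show ?thesis .
qed

section \<open>The strong topological coframe of sublocales\<close>

lemma sublocale_subset_closed_open_join:
  assumes S: "subl S" and x: "x \<in> carrier" and y: "y \<in> carrier"
    and above: "\<And>s. s \<in> S \<Longrightarrow> le y s \<Longrightarrow> le x s"
  shows "S \<subseteq> closed_open_join \<Omega> x y"
proof
  fix s assume s: "s \<in> S"
  then have sC: "s \<in> carrier"
    using sublocale_subset S by blast
  have "le y (imp (imp y s) s)"
    using le_imp_iff[of "imp y s" s y] imp_meet_le[OF y sC] meet_comm y sC by simp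
  then have "le x (imp (imp y s) s)"
    using above sublocale_imp[OF S _ s] by simp
  then have "le (meet (imp y s) x) s"
    using le_imp_iff[of "imp y s" s x] x sC meet_comm by simp
  then have "le (imp y s) (imp x s)"
    using le_imp_iff[OF x sC] by simp
  then show "s \<in> closed_open_join \<Omega> x y"
    unfolding closed_open_join_def using sC by simp
qed

lemma sublocale_eq_Int_closed_open_join:
  assumes S: "subl S"
  shows "S = carrier \<inter> \<Inter>((\<lambda>a. closed_open_join \<Omega> (nu S a) a) ` carrier)"
proof
  have "S \<subseteq> closed_open_join \<Omega> (nu S a) a" if "a \<in> carrier" for a
    using sublocale_subset_closed_open_join[OF S] nucleus_least[OF S] S that by simp
  then show "S \<subseteq> carrier \<inter> \<Inter>((\<lambda>a. closed_open_join \<Omega> (nu S a) a) ` carrier)"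
    using sublocale_subset[OF S] by auto
  show "carrier \<inter> \<Inter>((\<lambda>a. closed_open_join \<Omega> (nu S a) a) ` carrier) \<subseteq> S"
  proof
    fix x assume "x \<in> carrier \<inter> \<Inter>((\<lambda>a. closed_open_join \<Omega> (nu S a) a) ` carrier)"
    then have "x \<in> carrier" "x \<in> closed_open_join \<Omega> (nu S x) x"
      by auto
    then have "le (nu S x) x"
      using closed_open_join_le S by simp
    then show "x \<in> S"
      using nucleus_le_iff S \<open>x \<in> carrier\<close> by simp
  qed
qed

lemma nucleus_imp_le:
  "subl S \<Longrightarrow> w \<in> carrier \<Longrightarrow> x \<in> carrier \<Longrightarrow> le (nu S (imp w x)) (imp w (nu S x))"
  using nucleus_least sublocale_imp nucleus_in imp_mono_right le_nucleus by simp

lemma sublocale_nucleus_meet_le: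
  assumes S: "subl S" and T: "subl T"
  shows "subl {x \<in> carrier. le (meet (nu S x) (nu T x)) x}" (is "subl ?W")
  unfolding is_sublocale_def
proof (intro conjI allI impI ballI)
  fix A assume A: "A \<subseteq> ?W"
  then have AC: "A \<subseteq> carrier"
    by blast
  let ?m = "Inf_P \<Omega> A"
  have "le (meet (nu S ?m) (nu T ?m)) a" if a: "a \<in> A" for a
  proof -
    have aC: "a \<in> carrier" and a_le: "le (meet (nu S a) (nu T a)) a"
      using A a by auto
    have "le ?m a"
      using Inf_lower[OF AC a] .
    then have "le (meet (nu S ?m) (nu T ?m)) (meet (nu S a) (nu T a))"
      using meet_mono[OF nucleus_mono nucleus_mono] S T AC aC by simp
    then show ?thesis
      using le_trans[OF _ a_le] S T aC by simp
  qed
  then show "?m \<in> ?W"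
    using AC S T by (auto intro: Inf_greatest)
next
  fix w x assume w: "w \<in> carrier" and "x \<in> ?W"
  then have xC: "x \<in> carrier" and x_le: "le (meet (nu S x) (nu T x)) x"
    by auto
  have "le (meet (nu S (imp w x)) (nu T (imp w x))) (meet (imp w (nu S x)) (imp w (nu T x)))"
    using meet_mono[OF nucleus_imp_le nucleus_imp_le] w xC S T by simp
  also have "meet (imp w (nu S x)) (imp w (nu T x)) = imp w (meet (nu S x) (nu T x))"
    using imp_meet_distrib w S T by simp
  finally show "imp w x \<in> ?W"
    using le_trans[OF _ imp_mono_right[OF w _ xC x_le]] w xC S T by simp
qed (auto simp: sublocale_subset)

lemma nucleus_meet_le_of_mem_join:
  assumes S: "subl S" and T: "subl T" and x: "x \<in> SL.join S T"
  shows "le (meet (nu S x) (nu T x)) x"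
proof -
  let ?W = "{x \<in> carrier. le (meet (nu S x) (nu T x)) x}"
  have "x \<in> ?W" if "x \<in> S" for x
  proof -
    have "x \<in> carrier"
      using that sublocale_subset[OF S] by blast
    moreover from this have "nu S x = x"
      using that nucleus_eq_iff[OF S] by blast
    ultimately show ?thesis
      using meet_le1 T by simp
  qed
  moreover have "x \<in> ?W" if "x \<in> T" for x
  proof -
    have "x \<in> carrier"
      using that sublocale_subset[OF T] by blast
    moreover from this have "nu T x = x"
      using that nucleus_eq_iff[OF T] by blast
    ultimately show ?thesis
      using meet_le2 S by simp
  qed
  ultimately have "SL.join S T \<subseteq> ?W"
    by (intro join_Sl_least[OF S T sublocale_nucleus_meet_le[OF S T]]) blast+
  then show ?thesis
    using x by blast
qed

text \<open>With s = \<nu> S x, membership of x in S \<or> T gives x = s \<and> \<nu> T x, hence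
  s \<rightarrow> x = s \<rightarrow> \<nu> T x \<in> T for every T; and x = s \<and> (s \<rightarrow> x).\<close>
lemma Int_join_Sl_subset_join_Int:
  assumes S: "subl S" and TT: "TT \<subseteq> {T. subl T}"
    and x: "x \<in> carrier" "\<And>T. T \<in> TT \<Longrightarrow> x \<in> SL.join S T"
  shows "x \<in> SL.join S (carrier \<inter> \<Inter>TT)"
proof -
  let ?s = "nu S x" and ?I = "carrier \<inter> \<Inter>TT"
  have I: "subl ?I"
    using sublocale_Int TT by blast
  have sC: "?s \<in> carrier" and x_le_s: "le x ?s"
    using S le_nucleus x by simp_all
  have "imp ?s x \<in> T" if T: "T \<in> TT" for T
  proof -
    have T': "subl T"
      using T TT by blast
    have "le (meet ?s (nu T x)) x"
      using nucleus_meet_le_of_mem_join[OF S T'] x T by simp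
    moreover have "le x (meet ?s (nu T x))"
      using le_meet_iff x_le_s le_nucleus[OF T'] x sC T' by simp
    ultimately have "x = meet ?s (nu T x)"
      using le_antisym x sC T' by simp
    then have "imp ?s x = imp ?s (nu T x)"
      using imp_meet_self[OF sC, of "nu T x"] T' by simp
    then show "imp ?s x \<in> T"
      using sublocale_imp[OF T' sC nucleus_in[OF T']] by simp
  qed
  then have "imp ?s x \<in> SL.join S ?I"
    using join_Sl_upper2[OF S I] by auto
  moreover have "?s \<in> SL.join S ?I"
    using join_Sl_upper1[OF S I] nucleus_in[OF S] by blast
  ultimately have "meet ?s (imp ?s x) \<in> SL.join S ?I"
    using sublocale_meet[OF join_Sl_sublocale[OF S I]] by blast
  then show ?thesis
    using meet_imp_eq[OF sC x(1) x_le_s] by simp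
qed

lemma join_Inf_Sl_distrib:
  assumes S: "subl S" and TT: "TT \<subseteq> {T. subl T}"
  shows "SL.join S (Inf_P (Sl \<Omega>) TT) = Inf_P (Sl \<Omega>) ((\<lambda>T. SL.join S T) ` TT)"
proof -
  let ?I = "carrier \<inter> \<Inter>TT"
  have I: "subl ?I"
    using sublocale_Int TT by blast
  have "SL.join S ?I \<subseteq> SL.join S T" if "T \<in> TT" for T
    using that TT join_Sl_least[OF S I] join_Sl_sublocale[OF S] join_Sl_upper1[OF S]
      join_Sl_upper2[OF S] by blast
  then have "SL.join S ?I = carrier \<inter> \<Inter>((\<lambda>T. SL.join S T) ` TT)"
    using Int_join_Sl_subset_join_Int[OF S TT] sublocale_subset[OF join_Sl_sublocale[OF S I]]
    by blast
  moreover have "(\<lambda>T. SL.join S T) ` TT \<subseteq> pcarrier (Sl \<Omega>)"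
    using join_Sl_sublocale S TT by auto
  ultimately show ?thesis
    using Inf_Sl TT by simp
qed

lemma is_coframe_Sl: "is_coframe (Sl \<Omega>)"
  unfolding is_coframe_def using complete_lat_Sl join_Inf_Sl_distrib by simp

lemma complemented_closed_subl: "u \<in> carrier \<Longrightarrow> complemented (Sl \<Omega>) (closed_subl \<Omega> u)"
  unfolding complemented_def
  using sublocale_closed_subl sublocale_open_subl meet_Sl closed_Int_open bot_Sl
    join_closed_open closed_open_join_self top_Sl
  by (intro conjI bexI[of _ "open_subl \<Omega> u"]) simp_all

lemma top_coframe_Sl: "top_coframe (Sl \<Omega>)"
  unfolding top_coframe_def
proof (intro conjI ballI)
  show "is_coframe (Sl \<Omega>)"
    by (rule is_coframe_Sl)
  show "complemented (Sl \<Omega>) X" if "X \<in> closed (Sl \<Omega>)" for X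
    using that complemented_closed_subl by auto
  show "bot_P (Sl \<Omega>) \<in> closed (Sl \<Omega>)" "top_P (Sl \<Omega>) \<in> closed (Sl \<Omega>)"
    unfolding Sl_simps(3) closed_subl_top[symmetric] closed_subl_bot[symmetric] by simp_all
  fix X Y assume "X \<in> closed (Sl \<Omega>)" "Y \<in> closed (Sl \<Omega>)"
  then obtain a b where "a \<in> carrier" "b \<in> carrier" "X = closed_subl \<Omega> a" "Y = closed_subl \<Omega> b"
    by auto
  then show "SL.meet X Y \<in> closed (Sl \<Omega>)" "SL.join X Y \<in> closed (Sl \<Omega>)"
    using meet_Sl[OF sublocale_closed_subl sublocale_closed_subl] closed_Int_closed
      join_closed_closed
    by simp_all
qed

lemma strong_top_coframe_Sl: "strong_top_coframe (Sl \<Omega>)"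
  unfolding strong_top_coframe_def
proof (intro conjI allI impI)
  show "top_coframe (Sl \<Omega>)"
    by (rule top_coframe_Sl)
  fix T assume "T \<subseteq> closed (Sl \<Omega>)"
  then obtain A where "A \<subseteq> carrier" "T = closed_subl \<Omega> ` A"
    by (auto simp: subset_image_iff)
  then show "Inf_P (Sl \<Omega>) T \<in> closed (Sl \<Omega>)"
    using Inf_Sl_closed_subl by simp
qed

end

sublocale frame \<subseteq> SLC: strong_tcoframe "Sl \<Omega>"
  by unfold_locales
    (use is_coframe_Sl strong_top_coframe_Sl in \<open>simp_all add: is_coframe_def\<close>)

context frame
begin

lemma frame_hom_closed_subl: "frame_hom \<Omega> (meetC_op (Sl \<Omega>)) (closed_subl \<Omega>)"
  unfolding SLC.frame_hom_meetC_op_iff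
proof (intro conjI allI impI ballI)
  show "closed_subl \<Omega> ` carrier \<subseteq> closed (Sl \<Omega>)"
    by simp
  show "closed_subl \<Omega> (Sup_P \<Omega> S) = Inf_P (Sl \<Omega>) (closed_subl \<Omega> ` S)" if "S \<subseteq> carrier" for S
    using Inf_Sl_closed_subl[OF that] by simp
  show "closed_subl \<Omega> (meet a b) = SL.join (closed_subl \<Omega> a) (closed_subl \<Omega> b)"
    if "a \<in> carrier" "b \<in> carrier" for a b
    using join_closed_closed[OF that] by simp
  show "closed_subl \<Omega> (top_P \<Omega>) = bot_P (Sl \<Omega>)"
    by (rule closed_subl_top)
qed

lemma bij_betw_closed_subl: "bij_betw (closed_subl \<Omega>) carrier (meetC (Sl \<Omega>))"
  unfolding bij_betw_def SLC.meetC_eq_closed using inj_on_closed_subl by simp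

lemma meet_nucleus_le_nucleus_join:
  assumes S: "subl S" and T: "subl T" and a: "a \<in> carrier" and b: "b \<in> carrier"
  shows "le (meet (nu S a) (nu T b)) (nu (SL.join S T) (join a b))"
proof -
  let ?J = "SL.join S T" and ?p = "nu S a" and ?q = "nu T b"
  have J: "subl ?J"
    using join_Sl_sublocale[OF S T] .
  have pq: "meet ?p ?q \<in> carrier" and ab: "join a b \<in> carrier"
    using S T a b by simp_all
  have "S \<subseteq> closed_open_join \<Omega> (meet ?p ?q) (join a b)"
  proof (rule sublocale_subset_closed_open_join[OF S pq ab])
    fix s assume "s \<in> S" "le (join a b) s"
    then show "le (meet ?p ?q) s"
      using join_le_iff nucleus_least[OF S] le_trans[OF meet_le1] a b S T sublocale_subset[OF S]
      by (auto simp: subset_iff)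
  qed
  moreover have "T \<subseteq> closed_open_join \<Omega> (meet ?p ?q) (join a b)"
  proof (rule sublocale_subset_closed_open_join[OF T pq ab])
    fix s assume "s \<in> T" "le (join a b) s"
    then show "le (meet ?p ?q) s"
      using join_le_iff nucleus_least[OF T] le_trans[OF meet_le2] a b S T sublocale_subset[OF T]
      by (auto simp: subset_iff)
  qed
  ultimately have "nu ?J (join a b) \<in> closed_open_join \<Omega> (meet ?p ?q) (join a b)"
    using join_Sl_least[OF S T sublocale_closed_open_join[OF pq ab]] nucleus_in[OF J] by blast
  then show ?thesis
    using closed_open_join_le[OF pq ab] le_nucleus[OF J ab] by simp
qed

end

section \<open>The universal property\<close>

locale Sl_extension = frame \<Omega> + L: strong_tcoframe L
  for \<Omega> :: "('a, 'z) pos_scheme" and L :: "'b tcof" +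
  fixes f :: "'a \<Rightarrow> 'b"
  assumes frame_hom: "frame_hom \<Omega> (meetC_op L) f"
begin

lemma f_closed: "u \<in> carrier \<Longrightarrow> f u \<in> closed L"
  using frame_hom unfolding L.frame_hom_meetC_op_iff by auto

lemma f_in [simp]: "u \<in> carrier \<Longrightarrow> f u \<in> L.carrier"
  using f_closed L.closed_subset by blast

lemma f_complemented: "u \<in> carrier \<Longrightarrow> complemented L (f u)"
  using f_closed L.closed_complemented by blast

lemma f_Sup: "S \<subseteq> carrier \<Longrightarrow> f (Sup_P \<Omega> S) = Inf_P L (f ` S)"
  using frame_hom unfolding L.frame_hom_meetC_op_iff by auto

lemma f_meet: "a \<in> carrier \<Longrightarrow> b \<in> carrier \<Longrightarrow> f (meet a b) = L.join (f a) (f b)"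
  using frame_hom unfolding L.frame_hom_meetC_op_iff by auto

lemma f_top: "f (top_P \<Omega>) = bot_P L"
  using frame_hom unfolding L.frame_hom_meetC_op_iff by auto

lemma f_bot: "f (bot_P \<Omega>) = top_P L"
  unfolding bot_P_def top_P_def using f_Sup[of "{}"] by simp

lemma f_join: "a \<in> carrier \<Longrightarrow> b \<in> carrier \<Longrightarrow> f (join a b) = L.meet (f a) (f b)"
  unfolding join_P_def meet_P_def using f_Sup[of "{a, b}"] by simp

lemma f_antimono: "a \<in> carrier \<Longrightarrow> b \<in> carrier \<Longrightarrow> le a b \<Longrightarrow> L.le (f b) (f a)"
  using f_join[of a b] join_absorb2[of a b] L.meet_le1[of "f a" "f b"] by simp

definition radj :: "'b \<Rightarrow> 'a" where
  "radj m = Sup_P \<Omega> {u \<in> carrier. L.le m (f u)}"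

lemma radj_in [simp]: "radj m \<in> carrier"
  unfolding radj_def by (rule Sup_in) auto

lemma le_f_radj: "m \<in> L.carrier \<Longrightarrow> L.le m (f (radj m))"
  unfolding radj_def using f_Sup[of "{u \<in> carrier. L.le m (f u)}"]
  by (auto intro: L.Inf_greatest)

lemma le_f_iff_le_radj:
  assumes m: "m \<in> L.carrier" and u: "u \<in> carrier"
  shows "L.le m (f u) \<longleftrightarrow> le u (radj m)"
proof
  assume "L.le m (f u)"
  then show "le u (radj m)"
    unfolding radj_def using u by (intro Sup_upper) auto
next
  assume "le u (radj m)"
  then have "L.le (f (radj m)) (f u)"
    using f_antimono u by simp
  then show "L.le m (f u)"
    using L.le_trans[OF le_f_radj[OF m]] m u by simp
qed

definition extend_at :: "'a set \<Rightarrow> 'a \<Rightarrow> 'b" where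
  "extend_at S a = L.join (f (nu S a)) (compl_P L (f a))"

definition extend :: "'a set \<Rightarrow> 'b" where
  "extend S = Inf_P L (extend_at S ` carrier)"

lemma compl_f_in [simp]: "a \<in> carrier \<Longrightarrow> compl_P L (f a) \<in> L.carrier"
  using L.complement_compl_P(1)[OF f_complemented] by simp

lemma extend_at_in [simp]: "subl S \<Longrightarrow> a \<in> carrier \<Longrightarrow> extend_at S a \<in> L.carrier"
  unfolding extend_at_def by simp

lemma extend_in [simp]: "subl S \<Longrightarrow> extend S \<in> L.carrier"
  unfolding extend_def by (rule L.Inf_in) auto

lemma extend_le_extend_at: "subl S \<Longrightarrow> a \<in> carrier \<Longrightarrow> L.le (extend S) (extend_at S a)"
  unfolding extend_def by (rule L.Inf_lower) auto

lemma le_extend_iff: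
  assumes S: "subl S" and m: "m \<in> L.carrier"
  shows "L.le m (extend S) \<longleftrightarrow> (\<forall>a\<in>carrier. L.le (L.meet m (f a)) (f (nu S a)))"
proof -
  have "L.le m (extend_at S a) \<longleftrightarrow> L.le (L.meet m (f a)) (f (nu S a))" if "a \<in> carrier" for a
    unfolding extend_at_def using L.meet_le_iff_le_join_compl[OF f_complemented] m S that by simp
  moreover have "L.le m (extend S) \<longleftrightarrow> (\<forall>a\<in>carrier. L.le m (extend_at S a))"
  proof
    assume "L.le m (extend S)"
    then show "\<forall>a\<in>carrier. L.le m (extend_at S a)"
      using L.le_trans[OF _ extend_le_extend_at[OF S]] m S by simp
  next
    assume "\<forall>a\<in>carrier. L.le m (extend_at S a)"
    then show "L.le m (extend S)"
      unfolding extend_def using m S by (intro L.Inf_greatest) auto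
  qed
  ultimately show ?thesis
    by simp
qed

lemma extend_mono:
  assumes S: "subl S" and T: "subl T" and ST: "S \<subseteq> T"
  shows "L.le (extend S) (extend T)"
  unfolding le_extend_iff[OF T extend_in[OF S]]
proof
  fix a assume a: "a \<in> carrier"
  have "L.le (L.meet (extend S) (f a)) (f (nu S a))"
    using le_extend_iff[OF S extend_in[OF S]] S a by simp
  moreover have "L.le (f (nu S a)) (f (nu T a))"
    using f_antimono nucleus_antimono[OF S T ST a] S T by simp
  ultimately show "L.le (L.meet (extend S) (f a)) (f (nu T a))"
    using L.le_trans S T a by simp
qed

lemma radj_mem:
  assumes S: "subl S" and n: "n \<in> L.carrier" "L.le n (extend S)"
  shows "radj n \<in> S"
proof -
  let ?k = "radj n"
  have "L.le n (L.meet n (f ?k))"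
    using L.le_meet_iff le_f_radj n by simp
  moreover have "L.le (L.meet n (f ?k)) (f (nu S ?k))"
    using le_extend_iff[OF S n(1)] n(2) by simp
  ultimately have "L.le n (f (nu S ?k))"
    using L.le_trans n S by simp
  then have "le (nu S ?k) ?k"
    using le_f_iff_le_radj[OF n(1)] S by simp
  then show ?thesis
    using nucleus_le_iff S by simp
qed

lemma extend_Inf:
  assumes SS: "SS \<subseteq> {S. subl S}"
  shows "extend (carrier \<inter> \<Inter>SS) = Inf_P L (extend ` SS)"
proof -
  let ?I = "carrier \<inter> \<Inter>SS" and ?m = "Inf_P L (extend ` SS)"
  have I: "subl ?I"
    using sublocale_Int SS by blast
  have ext_SS: "extend ` SS \<subseteq> L.carrier"
    using SS by auto
  then have m: "?m \<in> L.carrier"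
    by simp
  have "L.le (extend ?I) ?m"
    using SS I extend_mono by (intro L.Inf_greatest) auto
  moreover have "L.le ?m (extend ?I)"
    unfolding le_extend_iff[OF I m]
  proof
    fix a assume a: "a \<in> carrier"
    let ?n = "L.meet ?m (f a)"
    have n: "?n \<in> L.carrier"
      using m a by simp
    have "L.le ?n (extend S)" if "S \<in> SS" for S
      using L.le_trans[OF L.meet_le1 L.Inf_lower[OF ext_SS imageI[OF that]]] m a SS that by auto
    then have "radj ?n \<in> ?I"
      using radj_mem n SS by auto
    moreover have "le a (radj ?n)"
      using le_f_iff_le_radj[OF n a] L.meet_le2 m a by simp
    ultimately have "L.le (f (radj ?n)) (f (nu ?I a))"
      using f_antimono nucleus_least[OF I] I a by simp
    then show "L.le ?n (f (nu ?I a))"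
      using L.le_trans[OF le_f_radj[OF n]] n I a by simp
  qed
  ultimately show ?thesis
    using L.le_antisym I m by simp
qed

lemma extend_join_le:
  assumes S: "subl S" and T: "subl T" and a: "a \<in> carrier" and b: "b \<in> carrier"
  shows "L.le (extend (SL.join S T)) (L.join (extend_at S a) (extend_at T b))"
proof -
  let ?J = "SL.join S T" and ?p = "nu S a" and ?q = "nu T b"
  let ?G = "extend ?J" and ?ca = "compl_P L (f a)" and ?cb = "compl_P L (f b)"
  let ?Z = "L.join (f ?p) (f ?q)"
  have J: "subl ?J"
    using join_Sl_sublocale[OF S T] .
  have G: "?G \<in> L.carrier" and Z: "?Z \<in> L.carrier"
    using J S T by simp_all
  have "L.le (L.meet ?G (f (join a b))) (f (nu ?J (join a b)))"
    using le_extend_iff[OF J G] G a b by simp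
  moreover have "L.le (f (nu ?J (join a b))) ?Z"
    using f_antimono[OF _ _ meet_nucleus_le_nucleus_join[OF S T a b]] f_meet J S T a b by simp
  ultimately have "L.le (L.meet ?G (f (join a b))) ?Z"
    by (rule L.le_trans) (use G J Z a b in simp_all)
  then have "L.le (L.meet (L.meet ?G (f a)) (f b)) ?Z"
    using f_join L.meet_assoc G a b by simp
  then have "L.le (L.meet ?G (f a)) (L.join ?Z ?cb)"
    using L.meet_le_iff_le_join_compl[OF f_complemented[OF b]] G a b Z by simp
  then have "L.le ?G (L.join (L.join ?Z ?cb) ?ca)"
    using L.meet_le_iff_le_join_compl[OF f_complemented[OF a]] G a b Z by simp
  moreover have "L.le (L.join (L.join ?Z ?cb) ?ca) (L.join (extend_at S a) (extend_at T b))"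
    (is "L.le _ ?R")
  proof -
    have R: "?R \<in> L.carrier"
      using S T a b by simp
    have "L.le (f ?p) ?R" "L.le ?ca ?R"
      unfolding extend_at_def using L.le_trans[OF _ L.join_ge1] L.join_ge1 L.join_ge2 S T a b
      by simp_all
    moreover have "L.le (f ?q) ?R" "L.le ?cb ?R"
      unfolding extend_at_def using L.le_trans[OF _ L.join_ge2] L.join_ge1 L.join_ge2 S T a b
      by simp_all
    ultimately show ?thesis
      using L.join_le_iff R S T a b by simp
  qed
  ultimately show ?thesis
    by (rule L.le_trans) (use G Z S T a b in simp_all)
qed

lemma extend_join:
  assumes S: "subl S" and T: "subl T"
  shows "extend (SL.join S T) = L.join (extend S) (extend T)"
proof (rule L.le_antisym)
  have J: "subl (SL.join S T)"
    using join_Sl_sublocale[OF S T] .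
  show "L.le (extend (SL.join S T)) (L.join (extend S) (extend T))"
    unfolding extend_def[of S] extend_def[of T]
    using extend_join_le S T J by (intro L.le_join_Inf_Inf) auto
  show "L.le (L.join (extend S) (extend T)) (extend (SL.join S T))"
    using L.join_le_iff extend_mono join_Sl_upper1 join_Sl_upper2 S T J by simp
qed (use S T join_Sl_sublocale in simp_all)

lemma extend_bot: "extend (bot_P (Sl \<Omega>)) = bot_P L"
proof -
  have s: "subl {top_P \<Omega>}"
    by (rule sublocale_top_singleton)
  have "nu {top_P \<Omega>} (bot_P \<Omega>) = top_P \<Omega>"
    using nucleus_in[OF s] by simp
  then have "extend_at {top_P \<Omega>} (bot_P \<Omega>) = bot_P L"
    unfolding extend_at_def using f_top f_bot L.compl_P_top L.join_bot[of "bot_P L"] by simp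
  then have "L.le (extend {top_P \<Omega>}) (bot_P L)"
    using extend_le_extend_at[OF s bot_in] by simp
  then show ?thesis
    unfolding bot_Sl using L.le_antisym L.bot_least extend_in[OF s] by simp
qed

lemma extend_closed_subl:
  assumes u: "u \<in> carrier"
  shows "extend (closed_subl \<Omega> u) = f u"
proof (rule L.le_antisym)
  have s: "subl (closed_subl \<Omega> u)"
    using sublocale_closed_subl[OF u] .
  have "nu (closed_subl \<Omega> u) (bot_P \<Omega>) = u"
    using nucleus_least[OF s, of u] nucleus_in[OF s] bot_least u le_antisym
    unfolding closed_subl_def by (simp add: s)
  then have "extend_at (closed_subl \<Omega> u) (bot_P \<Omega>) = f u"
    unfolding extend_at_def using f_bot L.compl_P_top L.join_bot u by simp
  then show "L.le (extend (closed_subl \<Omega> u)) (f u)"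
    using extend_le_extend_at[OF s bot_in] by simp
  show "L.le (f u) (extend (closed_subl \<Omega> u))"
    unfolding le_extend_iff[OF s f_in[OF u]]
  proof
    fix a assume a: "a \<in> carrier"
    have "le (nu (closed_subl \<Omega> u) a) (join u a)"
      using nucleus_least[OF s] join_ge1 join_ge2 u a unfolding closed_subl_def by simp
    then have "L.le (f (join u a)) (f (nu (closed_subl \<Omega> u) a))"
      using f_antimono s u a by simp
    then show "L.le (L.meet (f u) (f a)) (f (nu (closed_subl \<Omega> u) a))"
      using f_join u a by simp
  qed
qed (use u sublocale_closed_subl in simp_all)

lemma top_coframe_hom_extend: "top_coframe_hom (Sl \<Omega>) L extend"
  unfolding top_coframe_hom_def coframe_hom_def
proof (intro conjI allI impI ballI)
  show "extend ` pcarrier (Sl \<Omega>) \<subseteq> L.carrier"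
    by auto
  show "extend (Inf_P (Sl \<Omega>) SS) = Inf_P L (extend ` SS)" if "SS \<subseteq> pcarrier (Sl \<Omega>)" for SS
    using Inf_Sl[OF that] extend_Inf that by simp
  show "extend (SL.join S T) = L.join (extend S) (extend T)"
    if "S \<in> pcarrier (Sl \<Omega>)" "T \<in> pcarrier (Sl \<Omega>)" for S T
    using that extend_join by simp
  show "extend (bot_P (Sl \<Omega>)) = bot_P L"
    by (rule extend_bot)
  show "extend ` closed (Sl \<Omega>) \<subseteq> closed L"
    using extend_closed_subl f_closed by auto
qed

text \<open>A coframe morphism preserves complements, and o(u) is the complement of c(u).\<close>
lemma hom_open_subl:
  assumes h: "coframe_hom (Sl \<Omega>) L h" and hf: "\<forall>u\<in>carrier. h (closed_subl \<Omega> u) = f u"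
    and u: "u \<in> carrier"
  shows "h (open_subl \<Omega> u) = compl_P L (f u)"
proof (rule L.compl_P_unique[OF f_complemented[OF u], symmetric])
  have c: "subl (closed_subl \<Omega> u)" and o: "subl (open_subl \<Omega> u)"
    using sublocale_closed_subl sublocale_open_subl u by simp_all
  have hI: "h (Inf_P (Sl \<Omega>) SS) = Inf_P L (h ` SS)" if "SS \<subseteq> pcarrier (Sl \<Omega>)" for SS
    using h that unfolding coframe_hom_def by blast
  show "h (open_subl \<Omega> u) \<in> L.carrier"
    using h o unfolding coframe_hom_def by auto
  have "L.meet (f u) (h (open_subl \<Omega> u)) = h (SL.meet (closed_subl \<Omega> u) (open_subl \<Omega> u))"
    unfolding meet_P_def using hI[of "{closed_subl \<Omega> u, open_subl \<Omega> u}"] c o hf u by simp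
  also have "\<dots> = bot_P L"
    using meet_Sl[OF c o] closed_Int_open[OF u] bot_Sl h unfolding coframe_hom_def by simp
  finally show "L.meet (f u) (h (open_subl \<Omega> u)) = bot_P L" .
  have "L.join (f u) (h (open_subl \<Omega> u)) = h (SL.join (closed_subl \<Omega> u) (open_subl \<Omega> u))"
    using h c o hf u unfolding coframe_hom_def by simp
  also have "\<dots> = h (top_P (Sl \<Omega>))"
    using join_closed_open[OF u u] closed_open_join_self[OF u] top_Sl by simp
  also have "\<dots> = top_P L"
    unfolding top_P_def using hI[of "{}"] by simp
  finally show "L.join (f u) (h (open_subl \<Omega> u)) = top_P L" .
qed

lemma extend_unique:
  assumes h: "top_coframe_hom (Sl \<Omega>) L h" and hf: "\<forall>u\<in>carrier. h (closed_subl \<Omega> u) = f u"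
    and S: "subl S"
  shows "h S = extend S"
proof -
  have hc: "coframe_hom (Sl \<Omega>) L h"
    using h unfolding top_coframe_hom_def by simp
  let ?DD = "(\<lambda>a. closed_open_join \<Omega> (nu S a) a) ` carrier"
  have DD: "?DD \<subseteq> pcarrier (Sl \<Omega>)"
    using sublocale_closed_open_join S by auto
  have "h (closed_open_join \<Omega> (nu S a) a) = extend_at S a" if a: "a \<in> carrier" for a
  proof -
    have "h (closed_open_join \<Omega> (nu S a) a) = h (SL.join (closed_subl \<Omega> (nu S a)) (open_subl \<Omega> a))"
      using join_closed_open S a by simp
    also have "\<dots> = L.join (f (nu S a)) (compl_P L (f a))"
      using hc hf hom_open_subl[OF hc hf a] sublocale_closed_subl sublocale_open_subl S a
      unfolding coframe_hom_def by simp
    finally show ?thesis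
      unfolding extend_at_def .
  qed
  then have "h ` ?DD = extend_at S ` carrier"
    by (auto simp: image_iff)
  moreover have "h S = Inf_P L (h ` ?DD)"
    using sublocale_eq_Int_closed_open_join[OF S] Inf_Sl[OF DD] hc DD
    unfolding coframe_hom_def by metis
  ultimately show ?thesis
    unfolding extend_def by simp
qed

end

lemma (in frame) Sl_universal:
  fixes L :: "'b tcof"
  assumes L: "strong_top_coframe L" and f: "frame_hom \<Omega> (meetC_op L) f"
  shows "\<exists>g. top_coframe_hom (Sl \<Omega>) L g \<and> (\<forall>u\<in>carrier. g (closed_subl \<Omega> u) = f u)
      \<and> (\<forall>h. top_coframe_hom (Sl \<Omega>) L h \<and> (\<forall>u\<in>carrier. h (closed_subl \<Omega> u) = f u)
             \<longrightarrow> (\<forall>S\<in>pcarrier (Sl \<Omega>). h S = g S))"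
proof -
  interpret Sl_extension \<Omega> L f
    using frame_axioms strong_tcoframe_if_strong_top_coframe[OF L] f
    by (simp add: Sl_extension_def Sl_extension_axioms_def)
  have "h S = extend S"
    if "top_coframe_hom (Sl \<Omega>) L h" "\<forall>u\<in>carrier. h (closed_subl \<Omega> u) = f u"
      "S \<in> pcarrier (Sl \<Omega>)" for h S
    using extend_unique that by simp
  then show ?thesis
    using top_coframe_hom_extend extend_closed_subl by blast
qed

theorem mainTheorem17:
  fixes \<Omega> :: "'a pos"
  assumes "is_frame \<Omega>"
  shows "strong_top_coframe (Sl \<Omega>)
    \<and> frame_hom \<Omega> (meetC_op (Sl \<Omega>)) (closed_subl \<Omega>)
    \<and> bij_betw (closed_subl \<Omega>) (pcarrier \<Omega>) (meetC (Sl \<Omega>))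
    \<and> (\<forall>(L :: 'b tcof) f. strong_top_coframe L \<and> frame_hom \<Omega> (meetC_op L) f \<longrightarrow>
         (\<exists>g. top_coframe_hom (Sl \<Omega>) L g
              \<and> (\<forall>u\<in>pcarrier \<Omega>. g (closed_subl \<Omega> u) = f u)
              \<and> (\<forall>h. top_coframe_hom (Sl \<Omega>) L h
                     \<and> (\<forall>u\<in>pcarrier \<Omega>. h (closed_subl \<Omega> u) = f u)
                     \<longrightarrow> (\<forall>S\<in>pcarrier (Sl \<Omega>). h S = g S))))"
proof -
  interpret frame \<Omega>
    using assms by (rule frame_if_is_frame)
  show ?thesis
    using strong_top_coframe_Sl frame_hom_closed_subl bij_betw_closed_subl Sl_universal by blast
qed

end
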